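(* For all $m\ge2$, $n\ge2$ there exists a proportional mechanism $(A,q)$ for the goods allocation problem over the set $\mathcal{N}$ of normalized instances such that $\min_{i\in[m]}v_i(A(v)_i)=\mathrm{OPT}(v)$ for every $v\in\mathcal{N}$.
   Context: Goods allocation: $m$ agents $[m]$, $n$ goods $[n]$; an instance is a matrix $v\in\mathbb{R}_{\ge0}^{m\times n}$, $v_i(S)=\sum_{j\in S}v_{i,j}$. Normalized instances: $\mathcal{N}=\{v\in\mathbb{R}_{\ge0}^{m\times n}:\exists C\text{ with }v_i([n])=C\ \forall i\in[m]\}$. An allocation is a tuple of pairwise disjoint subsets of $[n]$ with union $[n]$. A mechanism $(A,q)$ assigns to each instance an allocation $A(v)$ and transfers $q(v)\in\mathbb{R}^m$; it is proportional if for every instance $v$ and $i\in[m]$: $v_i(A_i)-q_i\ge\frac1m\sum_{j\in[m]}(v_i(A_j)-q_j)$. $\mathrm{OPT}(v)=\max_X\min_{i\in[m]}v_i(X_i)$ over all allocations $X$. *)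

theory Defs
  imports Complex_Main
begin

text \<open>Agents are 0..<m, goods are 0..<n. An instance is v :: nat => nat => real,
  v i j = value of agent i for good j (only i < m, j < n are relevant).\<close>

definition val :: "(nat \<Rightarrow> nat \<Rightarrow> real) \<Rightarrow> nat \<Rightarrow> nat set \<Rightarrow> real" where
  "val v i S = (\<Sum>j\<in>S. v i j)"

definition instance_nonneg :: "nat \<Rightarrow> nat \<Rightarrow> (nat \<Rightarrow> nat \<Rightarrow> real) \<Rightarrow> bool" where
  "instance_nonneg m n v \<longleftrightarrow> (\<forall>i<m. \<forall>j<n. v i j \<ge> 0)"

definition normalized :: "nat \<Rightarrow> nat \<Rightarrow> (nat \<Rightarrow> nat \<Rightarrow> real) \<Rightarrow> bool" where
  "normalized m n v \<longleftrightarrow> instance_nonneg m n v \<and>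
     (\<exists>C. \<forall>i<m. val v i {0..<n} = C)"

definition is_alloc :: "nat \<Rightarrow> nat \<Rightarrow> (nat \<Rightarrow> nat set) \<Rightarrow> bool" where
  "is_alloc m n X \<longleftrightarrow> (\<forall>i<m. \<forall>k<m. i \<noteq> k \<longrightarrow> X i \<inter> X k = {}) \<and>
     (\<Union>i<m. X i) = {0..<n}"

definition OPT :: "nat \<Rightarrow> nat \<Rightarrow> (nat \<Rightarrow> nat \<Rightarrow> real) \<Rightarrow> real" where
  "OPT m n v = Max {Min ((\<lambda>i. val v i (X i)) ` {..<m}) | X. is_alloc m n X}"

definition proportional_on ::
  "nat \<Rightarrow> ((nat \<Rightarrow> nat \<Rightarrow> real) \<Rightarrow> bool) \<Rightarrow>
   ((nat \<Rightarrow> nat \<Rightarrow> real) \<Rightarrow> nat \<Rightarrow> nat set) \<Rightarrow>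
   ((nat \<Rightarrow> nat \<Rightarrow> real) \<Rightarrow> nat \<Rightarrow> real) \<Rightarrow> bool" where
  "proportional_on m P A q \<longleftrightarrow> (\<forall>v. P v \<longrightarrow> (\<forall>i<m.
     val v i (A v i) - q v i \<ge> (1 / real m) * (\<Sum>k<m. val v i (A v k) - q v k)))"

end

theory Submission
  imports Defs "HOL-Library.FuncSet"
begin

text \<open>Among the maximin-optimal allocations pick one of maximum utilitarian welfare W, and
  charge every agent the value of her own bundle. Then every utility is 0, and proportionality
  for agent i says exactly that W is at least her value C of all goods. If W < C, every agent
  values some other agent's bundle more than its owner does; following these envy edges
  yields a cycle, and rotating the bundles along it keeps every value above the maximin
  value while strictly raising W, a contradiction.\<close>

definition egalitarian :: "nat \<Rightarrow> (nat \<Rightarrow> nat \<Rightarrow> real) \<Rightarrow> (nat \<Rightarrow> nat set) \<Rightarrow> real" where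
  "egalitarian m v X = Min ((\<lambda>i. val v i (X i)) ` {..<m})"

definition welfare :: "nat \<Rightarrow> (nat \<Rightarrow> nat \<Rightarrow> real) \<Rightarrow> (nat \<Rightarrow> nat set) \<Rightarrow> real" where
  "welfare m v X = (\<Sum>i<m. val v i (X i))"

text \<open>Allocations made extensional outside the agents, so that there are only finitely many.\<close>

definition allocs :: "nat \<Rightarrow> nat \<Rightarrow> (nat \<Rightarrow> nat set) set" where
  "allocs m n = {X \<in> {..<m} \<rightarrow>\<^sub>E Pow {0..<n}. is_alloc m n X}"

lemma alloc_bundle_subset: "is_alloc m n X \<Longrightarrow> i < m \<Longrightarrow> X i \<subseteq> {0..<n}"
  unfolding is_alloc_def by blast

lemma sum_val_alloc:
  assumes "is_alloc m n X"
  shows "(\<Sum>k<m. val v i (X k)) = val v i {0..<n}"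
proof -
  have "finite (X k)" if "k < m" for k
    using alloc_bundle_subset[OF assms that] finite_subset by blast
  then have "sum (v i) (\<Union>k<m. X k) = (\<Sum>k<m. sum (v i) (X k))"
    using assms unfolding is_alloc_def by (intro sum.UNION_disjoint) auto
  then show ?thesis
    using assms unfolding is_alloc_def val_def by simp
qed

lemma is_alloc_permute:
  assumes "is_alloc m n X" and "bij_betw g {..<m} {..<m}"
  shows "is_alloc m n (X \<circ> g)"
  unfolding is_alloc_def
proof (intro conjI allI impI)
  fix i k assume "i < m" "k < m" "i \<noteq> k"
  then have "g i \<noteq> g k" "g i < m" "g k < m"
    using assms(2) by (auto simp: bij_betw_def dest: inj_onD)
  then show "(X \<circ> g) i \<inter> (X \<circ> g) k = {}"
    using assms(1) unfolding is_alloc_def by simp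
next
  have "(\<Union>i<m. (X \<circ> g) i) = (\<Union>k\<in>g ` {..<m}. X k)" by simp
  then show "(\<Union>i<m. (X \<circ> g) i) = {0..<n}"
    using assms unfolding is_alloc_def bij_betw_def by simp
qed

lemma restrict_in_allocs: "is_alloc m n X \<Longrightarrow> restrict X {..<m} \<in> allocs m n"
  unfolding allocs_def is_alloc_def by auto

lemma finite_allocs: "finite (allocs m n)"
proof (rule finite_subset)
  show "allocs m n \<subseteq> {..<m} \<rightarrow>\<^sub>E Pow {0..<n}" unfolding allocs_def by blast
qed (simp add: finite_PiE)

lemma egalitarian_restrict: "egalitarian m v (restrict X {..<m}) = egalitarian m v X"
  unfolding egalitarian_def by (auto intro!: arg_cong[where f = Min])

lemma welfare_restrict: "welfare m v (restrict X {..<m}) = welfare m v X"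
  unfolding welfare_def by simp

lemma OPT_eq_Max_allocs: "OPT m n v = Max (egalitarian m v ` allocs m n)"
proof -
  have "{Min ((\<lambda>i. val v i (X i)) ` {..<m}) | X. is_alloc m n X} = egalitarian m v ` allocs m n"
  proof (intro equalityI subsetI)
    fix r assume "r \<in> {Min ((\<lambda>i. val v i (X i)) ` {..<m}) | X. is_alloc m n X}"
    then obtain X where "is_alloc m n X" "r = egalitarian m v X"
      unfolding egalitarian_def by blast
    then show "r \<in> egalitarian m v ` allocs m n"
      using restrict_in_allocs egalitarian_restrict by (metis image_eqI)
  qed (auto simp: allocs_def egalitarian_def)
  then show ?thesis unfolding OPT_def by simp
qed

lemma finite_self_map_invariant_subset:
  assumes "finite B" and "B \<noteq> {}" and "f ` B \<subseteq> B"
  shows "\<exists>Z\<subseteq>B. Z \<noteq> {} \<and> f ` Z = Z"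
  using assms
proof (induction "card B" arbitrary: B rule: less_induct)
  case less
  show ?case
  proof (cases "f ` B = B")
    case True
    then show ?thesis using less.prems(2) by blast
  next
    case False
    then have smaller: "f ` B \<subset> B" using less.prems(3) by (simp add: psubset_eq)
    have "card (f ` B) < card B" using psubset_card_mono[OF less.prems(1) smaller] .
    moreover have "finite (f ` B)" "f ` B \<noteq> {}" "f ` (f ` B) \<subseteq> f ` B"
      using less.prems by auto
    ultimately obtain Z where "Z \<subseteq> f ` B" "Z \<noteq> {}" "f ` Z = Z"
      by (meson less.hyps)
    moreover from this(1) smaller have "Z \<subseteq> B" by (meson psubset_imp_subset subset_trans)
    ultimately show ?thesis by blast
  qed
qed

lemma finite_serial_relation_has_cycle:
  assumes "finite B" and "B \<noteq> {}" and "\<forall>i\<in>B. \<exists>k\<in>B. R i k"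
  obtains f Z where "Z \<subseteq> B" "Z \<noteq> {}" "f ` Z = Z" "\<forall>i\<in>Z. R i (f i)"
proof -
  obtain f where f: "\<forall>i\<in>B. f i \<in> B \<and> R i (f i)"
    using bchoice[of B "\<lambda>i k. k \<in> B \<and> R i k"] assms(3) by blast
  then have "f ` B \<subseteq> B" by auto
  then obtain Z where Z: "Z \<subseteq> B" "Z \<noteq> {}" "f ` Z = Z"
    using finite_self_map_invariant_subset[OF assms(1,2)] by meson
  moreover have "\<forall>i\<in>Z. R i (f i)" using Z(1) f by auto
  ultimately show ?thesis by (rule that)
qed

lemma bij_betw_extend_by_id:
  assumes "finite Z" and "Z \<subseteq> B" and "f ` Z = Z"
  shows "bij_betw (\<lambda>i. if i \<in> Z then f i else i) B B"
proof -
  have "bij_betw f Z Z"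
    using assms by (simp add: bij_betw_def finite_surj_inj)
  then have "bij_betw (\<lambda>i. if i \<in> Z then f i else id i) (Z \<union> (B - Z)) (Z \<union> (B - Z))"
    by (intro bij_betw_disjoint_Un) (auto simp: bij_betw_def)
  moreover have "Z \<union> (B - Z) = B" using assms(2) by blast
  ultimately show ?thesis by (simp only: id_apply)
qed

lemma egalitarian_le: "i < m \<Longrightarrow> egalitarian m v X \<le> val v i (X i)"
  unfolding egalitarian_def by (rule Min_le) auto

lemma egalitarian_ge_iff:
  "0 < m \<Longrightarrow> c \<le> egalitarian m v X \<longleftrightarrow> (\<forall>i<m. c \<le> val v i (X i))"
  unfolding egalitarian_def by (subst Min_ge_iff) auto

lemma allocs_nonempty:
  assumes "0 < m"
  shows "allocs m n \<noteq> {}"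
proof -
  have "is_alloc m n (\<lambda>i. if i = 0 then {0..<n} else {})"
    using assms unfolding is_alloc_def by auto
  then show ?thesis using restrict_in_allocs by blast
qed

lemma egalitarian_le_OPT: "is_alloc m n X \<Longrightarrow> egalitarian m v X \<le> OPT m n v"
  unfolding OPT_eq_Max_allocs
  by (metis Max_ge egalitarian_restrict finite_allocs finite_imageI imageI restrict_in_allocs)

lemma envies_someone_if_welfare_lt:
  assumes "welfare m v X < (\<Sum>k<m. val v i (X k))"
  shows "\<exists>k<m. val v k (X k) < val v i (X k)"
proof (rule ccontr)
  assume "\<not> ?thesis"
  then have "\<forall>k<m. val v i (X k) \<le> val v k (X k)" by (meson not_less)
  then have "(\<Sum>k<m. val v i (X k)) \<le> welfare m v X"
    unfolding welfare_def by (intro sum_mono) simp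
  with assms show False by simp
qed

lemma envy_cycle_reallocation:
  assumes alloc: "is_alloc m n X" and "0 < m"
    and envy: "\<forall>i<m. \<exists>k<m. val v k (X k) < val v i (X k)"
  obtains Y where "is_alloc m n Y" "egalitarian m v X \<le> egalitarian m v Y"
    "welfare m v X < welfare m v Y"
proof -
  have "{..<m} \<noteq> {}" using \<open>0 < m\<close> by auto
  moreover have "\<forall>i\<in>{..<m}. \<exists>k\<in>{..<m}. val v k (X k) < val v i (X k)" using envy by auto
  ultimately obtain f Z where Z: "Z \<subseteq> {..<m}" "Z \<noteq> {}" "f ` Z = Z"
    and envy_f: "\<forall>i\<in>Z. val v (f i) (X (f i)) < val v i (X (f i))"
    by (rule finite_serial_relation_has_cycle[OF finite_lessThan,
        where R = "\<lambda>i k. val v k (X k) < val v i (X k)"])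
  define g where "g = (\<lambda>i. if i \<in> Z then f i else i)"
  have bij: "bij_betw g {..<m} {..<m}"
    unfolding g_def using bij_betw_extend_by_id[OF finite_subset[OF Z(1)] Z(1,3)] by simp
  define Y where "Y = X \<circ> g"
  have gain: "val v (g i) (X (g i)) \<le> val v i (Y i)" for i
    using envy_f unfolding Y_def g_def by (cases "i \<in> Z") (auto intro: less_imp_le)
  have "egalitarian m v X \<le> val v i (Y i)" if "i < m" for i
    using egalitarian_le[of "g i" m v X] bij_betwE[OF bij] gain[of i] that by fastforce
  then have "egalitarian m v X \<le> egalitarian m v Y"
    using egalitarian_ge_iff[OF \<open>0 < m\<close>] by blast
  moreover have "welfare m v X < welfare m v Y"
  proof -
    have "welfare m v X = (\<Sum>i<m. val v (g i) (X (g i)))"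
      unfolding welfare_def using sum.reindex_bij_betw[OF bij, of "\<lambda>k. val v k (X k)"] by simp
    also have "\<dots> < (\<Sum>i<m. val v i (Y i))"
    proof (rule sum_strict_mono_ex1)
      obtain i where "i \<in> Z" using Z(2) by blast
      then have "i \<in> {..<m} \<and> val v (g i) (X (g i)) < val v i (Y i)"
        using Z(1) envy_f unfolding Y_def g_def by auto
      then show "\<exists>i\<in>{..<m}. val v (g i) (X (g i)) < val v i (Y i)" by blast
    qed (use gain in auto)
    finally show ?thesis unfolding welfare_def .
  qed
  ultimately show ?thesis using is_alloc_permute[OF alloc bij] unfolding Y_def by (rule that[rotated])
qed

lemma ex_maximin_alloc_welfare_ge:
  assumes "0 < m" and totals: "\<forall>i<m. val v i {0..<n} = C"
  obtains X where "is_alloc m n X" "egalitarian m v X = OPT m n v" "C \<le> welfare m v X"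
proof -
  define M where "M = {X \<in> allocs m n. egalitarian m v X = OPT m n v}"
  have "finite M" unfolding M_def using finite_allocs by simp
  obtain X0 where "X0 \<in> allocs m n" "OPT m n v = egalitarian m v X0"
    using obtains_MAX[OF finite_allocs allocs_nonempty[OF \<open>0 < m\<close>]] OPT_eq_Max_allocs by metis
  then have "M \<noteq> {}" unfolding M_def by auto
  then obtain X where "X \<in> M" and X_Max: "Max (welfare m v ` M) = welfare m v X"
    using obtains_MAX[OF \<open>finite M\<close>] by metis
  then have X: "is_alloc m n X" "egalitarian m v X = OPT m n v"
    unfolding M_def allocs_def by auto
  have X_max: "welfare m v Y \<le> welfare m v X" if "Y \<in> M" for Y
    using Max_ge[of "welfare m v ` M" "welfare m v Y"] \<open>finite M\<close> that X_Max by simp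
  have "C \<le> welfare m v X"
  proof (rule ccontr)
    assume "\<not> C \<le> welfare m v X"
    then have "\<forall>i<m. welfare m v X < (\<Sum>k<m. val v i (X k))"
      using totals sum_val_alloc[OF X(1)] by simp
    then have "\<forall>i<m. \<exists>k<m. val v k (X k) < val v i (X k)"
      using envies_someone_if_welfare_lt by blast
    then obtain Y where Y: "is_alloc m n Y" "egalitarian m v X \<le> egalitarian m v Y"
      and "welfare m v X < welfare m v Y"
      using envy_cycle_reallocation[OF X(1) \<open>0 < m\<close>] by blast
    moreover have "restrict Y {..<m} \<in> M"
      using Y X(2) egalitarian_le_OPT[OF Y(1)] restrict_in_allocs[OF Y(1)]
      unfolding M_def by (auto simp: egalitarian_restrict intro: order.antisym)
    ultimately show False using X_max[of "restrict Y {..<m}"] by (simp add: welfare_restrict)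
  qed
  with X show ?thesis by (rule that)
qed

lemma proportional_on_own_value_transfers:
  assumes "\<And>v. P v \<Longrightarrow> is_alloc m n (A v) \<and> (\<forall>i<m. val v i {0..<n} \<le> welfare m v (A v))"
  shows "proportional_on m P A (\<lambda>v i. val v i (A v i))"
  unfolding proportional_on_def
proof (intro allI impI)
  fix v i assume "P v" "i < m"
  then have "(\<Sum>k<m. val v i (A v k) - val v k (A v k)) \<le> 0"
    using assms[OF \<open>P v\<close>] sum_val_alloc[of m n "A v" v i]
    by (simp add: sum_subtractf welfare_def)
  then show "1 / real m * (\<Sum>k<m. val v i (A v k) - val v k (A v k))
      \<le> val v i (A v i) - val v i (A v i)"
    by (simp add: divide_nonpos_nonneg)
qed

theorem mainTheorem9:
  fixes m n :: nat
  assumes "m \<ge> 2" and "n \<ge> 2"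
  shows "\<exists>(A :: (nat \<Rightarrow> nat \<Rightarrow> real) \<Rightarrow> nat \<Rightarrow> nat set)
            (q :: (nat \<Rightarrow> nat \<Rightarrow> real) \<Rightarrow> nat \<Rightarrow> real).
           (\<forall>v. normalized m n v \<longrightarrow> is_alloc m n (A v)) \<and>
           proportional_on m (normalized m n) A q \<and>
           (\<forall>v. normalized m n v \<longrightarrow>
              Min ((\<lambda>i. val v i (A v i)) ` {..<m}) = OPT m n v)"
proof -
  define good where "good v X \<longleftrightarrow> is_alloc m n X \<and> egalitarian m v X = OPT m n v \<and>
    (\<forall>i<m. val v i {0..<n} \<le> welfare m v X)" for v X
  have ex_good: "\<exists>X. good v X" if normal: "normalized m n v" for v
  proof -
    obtain C where "\<forall>i<m. val v i {0..<n} = C" using normal unfolding normalized_def by blast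
    moreover have "0 < m" using assms(1) by simp
    ultimately show ?thesis
      unfolding good_def by (metis ex_maximin_alloc_welfare_ge)
  qed
  have A: "good v (SOME X. good v X)" if "normalized m n v" for v
    using someI_ex[OF ex_good[OF that]] .
  show ?thesis
  proof (intro exI conjI)
    show "proportional_on m (normalized m n) (\<lambda>v. SOME X. good v X)
        (\<lambda>v i. val v i ((SOME X. good v X) i))"
      using A unfolding good_def by (intro proportional_on_own_value_transfers) blast
  qed (use A in \<open>auto simp: good_def egalitarian_def\<close>)
qed

end
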